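(* Let $n\ge2$ be an integer, $j$ a positive integer, $\lambda\in\mathbb{R}$ with $\lambda\ge\frac{(n-1)j}{2}$, $\alpha=1-\frac1n$, $\beta=\frac12(1-\frac1n)-\frac{\lambda}{jn}$, and assume $\alpha-\beta-1\le1$. Let $\mathcal{G}(z)=e^{jz^n/2}\mathcal{M}(\beta,\alpha,-jz^n)$ and $\mathcal{D}(z)=e^{jz^n/2}\mathcal{T}(\beta,\alpha,-jz^n)$. There is $C_n>0$ depending only on $n$ such that for all such $j,\lambda$ and all $z\ge1$, $$C_n^{-1}e^{-\frac{jz^n}{2}}(jz^n)^{\beta-\alpha}\le\mathcal{D}(z)\le C_ne^{-\frac{jz^n}{2}}(jz^n)^{\beta-\alpha},\qquad C_n^{-1}e^{\frac{jz^n}{2}}(jz^n)^{-\beta}\le\mathcal{G}(z)\le C_ne^{\frac{jz^n}{2}}(jz^n)^{-\beta}.$$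
   Context: $(x)_k=\prod_{m=1}^k(x+m-1)$, $(x)_0=1$. $\mathcal{M}(\beta,\alpha,y)=\sum_{k\ge0}\frac{(\beta)_k}{(\alpha)_k}\frac{y^k}{k!}$. For $y<0$, $\mathcal{T}(\beta,\alpha,y)=\frac{e^y}{\Gamma(\alpha-\beta)}\int_0^\infty e^{yt}t^{\alpha-\beta-1}(1+t)^{\beta-1}dt$. *)

theory Defs
  imports "HOL-Analysis.Analysis"
begin

definition kummerM :: "real \<Rightarrow> real \<Rightarrow> real \<Rightarrow> real" where
  "kummerM \<beta> \<alpha> y = (\<Sum>k. pochhammer \<beta> k / pochhammer \<alpha> k * y ^ k / fact k)"

text \<open>The function T(beta, alpha, y), given by the integral formula (intended for y < 0).\<close>
definition kummerT :: "real \<Rightarrow> real \<Rightarrow> real \<Rightarrow> real" where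
  "kummerT \<beta> \<alpha> y = exp y / Gamma (\<alpha> - \<beta>) *
     (LBINT t:{0<..}. exp (y * t) * t powr (\<alpha> - \<beta> - 1) * (1 + t) powr (\<beta> - 1))"

end

(*
  With w = j z^n one has w \<ge> 1, 1/2 \<le> \<alpha> \<le> 1, \<beta> \<le> 0 and \<alpha> - \<beta> \<le> 2, and C = 64 e^4 works.

  D: in the integral defining T(\<beta>, \<alpha>, -w) the weight (1 + t) powr (\<beta> - 1) lies between
  exp ((\<beta> - 1) t) and 1, so the integral is squeezed between the Gamma integrals
  \<Gamma>(\<alpha> - \<beta>) (w + 1 - \<beta>) powr (\<beta> - \<alpha>) and \<Gamma>(\<alpha> - \<beta>) w powr (\<beta> - \<alpha>).

  G: Kummer's transformation M(\<beta>, \<alpha>, -w) = e^-w M(\<alpha> - \<beta>, \<alpha>, w) (a Cauchy product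
  followed by Chu-Vandermonde) turns the alternating series into one with positive terms.
  For c = -\<beta> \<in> [0, 2] the coefficient ratios (\<alpha> + c)_k / (\<alpha>)_k are within constant
  factors of (k + 1) powr c, and the Poisson average of (k + 1) powr c with parameter w is
  within constant factors of (w + 1) powr c, because t powr c is squeezed between two
  quadratics in t whose Poisson averages are explicit.
*)
theory Submission
  imports Defs "HOL-Computational_Algebra.Formal_Power_Series" "HOL-Real_Asymp.Real_Asymp"
begin

section \<open>Gamma integrals and the function T\<close>

lemma has_integral_nonneg_imp_lborel:
  fixes f :: "real \<Rightarrow> real"
  assumes f: "f \<in> borel_measurable borel" and nonneg: "\<And>x. 0 \<le> f x"
    and I: "(f has_integral I) UNIV"
  shows "integrable lborel f" "integral\<^sup>L lborel f = I"
proof -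
  have "integral\<^sup>N lborel f = ennreal I"
    using nn_integral_has_integral_lborel[OF f nonneg I] by simp
  then show int: "integrable lborel f"
    by (intro integrableI_nonneg) (use f nonneg in auto)
  show "integral\<^sup>L lborel f = I"
    using integral_lborel[OF int] I by (simp add: integral_unique)
qed

lemma Gamma_lborel_integral:
  fixes a :: real
  assumes "a > 0"
  shows "integrable lborel (\<lambda>t. indicator {0<..} t * (t powr (a - 1) / exp t))"
    "(\<integral>t. indicator {0<..} t * (t powr (a - 1) / exp t) \<partial>lborel) = Gamma a"
proof -
  have "((\<lambda>t. t powr (a - 1) / exp t) has_integral Gamma a) {0..}"
    using Gamma_integral_real[OF assms] .
  then have "((\<lambda>t. t powr (a - 1) / exp t) has_integral Gamma a) (interior {0..})"
    by (subst has_integral_interior) auto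
  then have "((\<lambda>t. t powr (a - 1) / exp t) has_integral Gamma a) {0<..}"
    by simp
  then have "((\<lambda>t. if t \<in> {0<..} then t powr (a - 1) / exp t else 0) has_integral Gamma a) UNIV"
    by (simp only: has_integral_restrict_UNIV)
  then have "((\<lambda>t. indicator {0<..} t * (t powr (a - 1) / exp t)) has_integral Gamma a) UNIV"
    by (rule has_integral_eq[rotated]) (simp add: indicator_def)
  moreover have "(\<lambda>t. indicator {0<..} t * (t powr (a - 1) / exp t)) \<in> borel_measurable borel"
    by measurable
  ultimately show "integrable lborel (\<lambda>t. indicator {0<..} t * (t powr (a - 1) / exp t))"
    "(\<integral>t. indicator {0<..} t * (t powr (a - 1) / exp t) \<partial>lborel) = Gamma a"
    by (auto intro!: has_integral_nonneg_imp_lborel simp: indicator_def)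
qed

lemma Gamma_scaled_set_integral:
  fixes a w :: real
  assumes a: "a > 0" and w: "w > 0"
  shows "set_integrable lborel {0<..} (\<lambda>t. exp (- w * t) * t powr (a - 1))"
    "(LBINT t:{0<..}. exp (- w * t) * t powr (a - 1)) = Gamma a * w powr - a"
proof -
  define g where "g t = indicator {0<..} t * (t powr (a - 1) / exp t)" for t :: real
  define f where "f t = indicator {0<..} t * (exp (- w * t) * t powr (a - 1))" for t :: real
  have g_scaled: "g (w * t) = w powr (a - 1) * f t" for t
    using w by (auto simp: g_def f_def indicator_def powr_mult exp_minus divide_inverse
        zero_less_mult_iff mult_ac)
  have "integrable lborel (\<lambda>t. g (w * t))"
    using lborel_integrable_real_affine[OF Gamma_lborel_integral(1)[OF a], of w 0] w
    by (simp add: g_def)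
  then have "integrable lborel (\<lambda>t. w powr (a - 1) * f t)"
    by (simp only: g_scaled)
  then show "set_integrable lborel {0<..} (\<lambda>t. exp (- w * t) * t powr (a - 1))"
    using w by (simp add: set_integrable_def f_def)
  have "Gamma a = (\<integral>t. g t \<partial>lborel)"
    unfolding g_def by (rule Gamma_lborel_integral(2)[OF a, symmetric])
  also have "\<dots> = w * (\<integral>t. g (w * t) \<partial>lborel)"
    using lborel_integral_real_affine[of w g 0] w by simp
  also have "\<dots> = w powr a * (\<integral>t. f t \<partial>lborel)"
    using w by (simp add: g_scaled powr_mult_base)
  finally show "(LBINT t:{0<..}. exp (- w * t) * t powr (a - 1)) = Gamma a * w powr - a"
    using w by (simp add: set_lebesgue_integral_def f_def powr_minus field_simps)
qed

lemma one_plus_powr_nonpos_bounds: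
  fixes p t :: real
  assumes p: "p \<le> 0" and t: "t \<ge> 0"
  shows "exp (p * t) \<le> (1 + t) powr p" "(1 + t) powr p \<le> 1"
proof -
  have eq: "(1 + t) powr p = exp (p * ln (1 + t))"
    using t by (simp add: powr_def)
  have "0 \<le> ln (1 + t)" "ln (1 + t) \<le> t"
    using t by (simp_all add: ln_add_one_self_le_self)
  then have "p * t \<le> p * ln (1 + t)" "p * ln (1 + t) \<le> 0"
    using p by (simp_all add: mult_left_mono_neg mult_nonpos_nonneg)
  then show "exp (p * t) \<le> (1 + t) powr p" "(1 + t) powr p \<le> 1"
    unfolding eq by simp_all
qed

lemma kummerT_bounds:
  fixes \<beta> b w :: real
  assumes \<beta>b: "\<beta> < b" and \<beta>1: "\<beta> \<le> 1" and w: "w > 0"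
  shows "exp (- w) * (w + 1 - \<beta>) powr (\<beta> - b) \<le> kummerT \<beta> b (- w)"
    "kummerT \<beta> b (- w) \<le> exp (- w) * w powr (\<beta> - b)"
proof -
  define a where "a = b - \<beta>"
  define f where "f t = exp (- w * t) * t powr (a - 1) * (1 + t) powr (\<beta> - 1)" for t :: real
  have a: "a > 0" using \<beta>b by (simp add: a_def)
  have T: "kummerT \<beta> b (- w) = exp (- w) / Gamma a * (LBINT t:{0<..}. f t)"
    by (simp add: kummerT_def f_def a_def)
  note lo = Gamma_scaled_set_integral[OF a, of "w + 1 - \<beta>"]
  note up = Gamma_scaled_set_integral[OF a w]
  have f_lo: "exp (- (w + 1 - \<beta>) * t) * t powr (a - 1) \<le> f t" if "t \<in> {0<..}" for t
  proof -
    have "exp (- (w + 1 - \<beta>) * t) = exp (- w * t) * exp ((\<beta> - 1) * t)"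
      by (simp add: mult_exp_exp algebra_simps)
    also have "\<dots> \<le> exp (- w * t) * (1 + t) powr (\<beta> - 1)"
      using one_plus_powr_nonpos_bounds(1)[of "\<beta> - 1" t] \<beta>1 that by simp
    finally have "exp (- (w + 1 - \<beta>) * t) * t powr (a - 1)
        \<le> exp (- w * t) * (1 + t) powr (\<beta> - 1) * t powr (a - 1)"
      by (rule mult_right_mono) simp
    then show ?thesis
      by (simp add: f_def mult_ac)
  qed
  have f_up: "f t \<le> exp (- w * t) * t powr (a - 1)" if "t \<in> {0<..}" for t
    using one_plus_powr_nonpos_bounds(2)[of "\<beta> - 1" t] \<beta>1 that
    by (simp add: f_def mult_left_le)
  have f_int: "set_integrable lborel {0<..} f"
  proof (rule set_integrable_bound[OF up(1)])
    show "set_borel_measurable lborel {0<..} f"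
      unfolding set_borel_measurable_def f_def by measurable
    show "AE t in lborel. t \<in> {0<..} \<longrightarrow>
        norm (f t) \<le> norm (exp (- w * t) * t powr (a - 1))"
      using f_up by (intro AE_I2) (simp add: f_def)
  qed
  have "Gamma a * (w + 1 - \<beta>) powr - a \<le> (LBINT t:{0<..}. f t)"
    using set_integral_mono[OF lo(1) f_int f_lo] lo(2) w \<beta>1 by simp
  moreover have "(LBINT t:{0<..}. f t) \<le> Gamma a * w powr - a"
    using set_integral_mono[OF f_int up(1) f_up] up(2) by simp
  moreover have "Gamma a > 0" using a by simp
  ultimately show "exp (- w) * (w + 1 - \<beta>) powr (\<beta> - b) \<le> kummerT \<beta> b (- w)"
    "kummerT \<beta> b (- w) \<le> exp (- w) * w powr (\<beta> - b)"
    by (simp_all add: T a_def field_simps)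
qed

section \<open>Kummer's transformation\<close>

definition kummer_term :: "real \<Rightarrow> real \<Rightarrow> real \<Rightarrow> nat \<Rightarrow> real" where
  "kummer_term a b y k = pochhammer a k / pochhammer b k * y ^ k / fact k"

lemma kummerM_eq_suminf: "kummerM a b y = (\<Sum>k. kummer_term a b y k)"
  by (simp add: kummerM_def kummer_term_def)

lemma kummer_term_Suc:
  assumes "b > 0"
  shows "kummer_term a b y (Suc k)
    = kummer_term a b y k * ((a + real k) * y / ((b + real k) * (real k + 1)))"
proof -
  have "pochhammer b k > 0" "b + real k > 0"
    using assms by (simp_all add: pochhammer_pos add_pos_nonneg)
  then show ?thesis
    by (simp add: kummer_term_def pochhammer_Suc field_simps)
qed

lemma summable_norm_kummer_term:
  assumes b: "b > 0"
  shows "summable (\<lambda>k. norm (kummer_term a b y k))"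
proof -
  define q where "q k = (\<bar>a\<bar> + real k) * \<bar>y\<bar> / ((b + real k) * (real k + 1))" for k
  have "q \<longlonglongrightarrow> 0"
    unfolding q_def by real_asymp
  then have "eventually (\<lambda>k. q k < 1 / 2) sequentially"
    by (rule order_tendstoD) simp
  then obtain N where N: "\<And>k. k \<ge> N \<Longrightarrow> q k \<le> 1 / 2"
    unfolding eventually_sequentially by (blast intro: less_imp_le)
  show ?thesis
  proof (rule summable_ratio_test[of "1 / 2" N])
    fix k assume "k \<ge> N"
    have "norm ((a + real k) * y / ((b + real k) * (real k + 1))) \<le> q k"
      using b by (auto simp: q_def abs_mult intro!: divide_right_mono mult_right_mono)
    with N[OF \<open>k \<ge> N\<close>]
    have "norm ((a + real k) * y / ((b + real k) * (real k + 1))) \<le> 1 / 2"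
      by linarith
    then have "norm (kummer_term a b y (Suc k)) \<le> norm (kummer_term a b y k) * (1 / 2)"
      unfolding kummer_term_Suc[OF b] norm_mult by (rule mult_left_mono) simp
    then show "norm (norm (kummer_term a b y (Suc k)))
        \<le> 1 / 2 * norm (norm (kummer_term a b y k))"
      by simp
  qed simp
qed

lemma pochhammer_minus_of_nat:
  assumes "k \<le> m"
  shows "pochhammer (- of_nat m :: real) k = (-1) ^ k * fact m / fact (m - k)"
proof -
  have "(-1) ^ k * pochhammer (- of_nat m :: real) k / fact k = fact m / (fact k * fact (m - k))"
    using gbinomial_pochhammer[of "of_nat m :: real" k] binomial_gbinomial[of m k, where 'a = real]
      binomial_fact[OF assms, where 'a = real] by simp
  then have "(-1) ^ k * pochhammer (- of_nat m :: real) k = fact m / fact (m - k)"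
    by (simp add: field_simps)
  then have "(-1) ^ k * ((-1) ^ k * pochhammer (- of_nat m :: real) k)
      = (-1) ^ k * fact m / fact (m - k)"
    by (metis times_divide_eq_right)
  moreover have "(-1 :: real) ^ k * (-1) ^ k = 1"
    by (simp flip: power_add)
  ultimately show ?thesis
    unfolding mult.assoc[symmetric] by simp
qed

lemma exp_series_sums: "(\<lambda>k. y ^ k / fact k) sums exp (y :: real)"
  using exp_converges[of y] by (simp add: divide_inverse mult.commute)

lemma kummer_term_Cauchy_product:
  assumes b: "b > 0"
  shows "(\<Sum>i\<le>m. kummer_term a b w i * ((- w) ^ (m - i) / fact (m - i)))
    = kummer_term (b - a) b (- w) m"
proof -
  have coeff_eq: "kummer_term a b w k * ((- w) ^ (m - k) / fact (m - k))
      = pochhammer a k * pochhammer (- of_nat m) k / (of_nat (fact k) * pochhammer b k)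
        * ((- w) ^ m / fact m)" if "k \<in> {0..m}" for k
  proof -
    from that have k: "k \<le> m" by simp
    have "(- w) ^ m = (- w) ^ k * (- w) ^ (m - k)"
      using k by (simp flip: power_add)
    then have "(- w) ^ m = (-1) ^ k * w ^ k * (- w) ^ (m - k)"
      by (simp add: power_minus[of w k])
    moreover have "(-1 :: real) ^ k * (-1) ^ k = 1"
      by (simp flip: power_add)
    ultimately show ?thesis
      by (simp add: kummer_term_def pochhammer_minus_of_nat[OF k] field_simps)
  qed
  have "(\<Sum>i\<le>m. kummer_term a b w i * ((- w) ^ (m - i) / fact (m - i)))
      = (\<Sum>k=0..m. pochhammer a k * pochhammer (- of_nat m) k
          / (of_nat (fact k) * pochhammer b k)) * ((- w) ^ m / fact m)"
    by (simp only: atMost_atLeast0 sum_distrib_right sum.cong[OF refl coeff_eq])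
  also have "\<dots> = pochhammer (b - a) m / pochhammer b m * ((- w) ^ m / fact m)"
    using b by (subst Vandermonde_pochhammer) auto
  finally show ?thesis
    by (simp add: kummer_term_def)
qed

theorem kummerM_Kummer_transformation:
  assumes b: "b > 0"
  shows "kummerM (b - a) b (- w) = exp (- w) * kummerM a b w"
proof -
  have "summable (\<lambda>k. norm ((- w) ^ k / fact k :: real))"
    using exp_series_sums[of "\<bar>w\<bar>"] by (simp add: sums_iff abs_mult power_abs)
  from Cauchy_product_sums[OF summable_norm_kummer_term[OF b, of a w] this]
  have "kummer_term (b - a) b (- w) sums
      ((\<Sum>k. kummer_term a b w k) * (\<Sum>k. (- w) ^ k / fact k))"
    by (simp only: kummer_term_Cauchy_product[OF b])
  then show ?thesis
    using exp_series_sums[of "- w"] by (simp add: kummerM_eq_suminf sums_iff mult.commute)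
qed

section \<open>Poisson averages of powers\<close>

lemma exp_series_index_shift:
  fixes f :: "nat \<Rightarrow> real"
  assumes "(\<lambda>k. f (k + 1) * (y ^ k / fact k)) sums s"
  shows "(\<lambda>k. real k * f k * (y ^ k / fact k)) sums (y * s)"
proof -
  have "(\<lambda>k. real (Suc k) * f (Suc k) * (y ^ Suc k / fact (Suc k)))
      = (\<lambda>k. y * (f (k + 1) * (y ^ k / fact k)))"
    unfolding fact_Suc power_Suc by (simp add: fun_eq_iff field_simps del: of_nat_Suc)
  with sums_mult[OF assms, of y]
  have "(\<lambda>k. real (Suc k) * f (Suc k) * (y ^ Suc k / fact (Suc k))) sums (y * s)"
    by simp
  then show ?thesis
    by (subst (asm) sums_Suc_iff) simp
qed

lemma exp_series_first_moment:
  "(\<lambda>k. real (k + 1) * (y ^ k / fact k)) sums ((y + 1) * exp (y :: real))"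
proof -
  have "(\<lambda>k. real k * 1 * (y ^ k / fact k)) sums (y * exp y)"
    by (rule exp_series_index_shift) (simp add: exp_series_sums)
  from sums_add[OF this exp_series_sums[of y]]
  have "(\<lambda>k. real k * 1 * (y ^ k / fact k) + y ^ k / fact k) sums (y * exp y + exp y)" .
  moreover have "(\<lambda>k. real k * 1 * (y ^ k / fact k) + y ^ k / fact k)
      = (\<lambda>k. real (k + 1) * (y ^ k / fact k))"
    by (simp add: fun_eq_iff field_simps)
  ultimately show ?thesis
    by (simp add: ring_distribs)
qed

lemma exp_series_second_moment:
  "(\<lambda>k. real (k + 1) ^ 2 * (y ^ k / fact k)) sums ((y\<^sup>2 + 3 * y + 1) * exp (y :: real))"
proof -
  have "(\<lambda>k. real k * real k * (y ^ k / fact k)) sums (y * ((y + 1) * exp y))"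
    by (rule exp_series_index_shift) (use exp_series_first_moment[of y] in simp)
  from sums_add[OF this sums_diff[OF sums_mult[OF exp_series_first_moment[of y], of 2]
      exp_series_sums[of y]]]
  have "(\<lambda>k. real k * real k * (y ^ k / fact k)
        + (2 * (real (k + 1) * (y ^ k / fact k)) - y ^ k / fact k))
      sums (y * ((y + 1) * exp y) + (2 * ((y + 1) * exp y) - exp y))" .
  moreover have "(\<lambda>k. real k * real k * (y ^ k / fact k)
        + (2 * (real (k + 1) * (y ^ k / fact k)) - y ^ k / fact k))
      = (\<lambda>k. real (k + 1) ^ 2 * (y ^ k / fact k))"
    by (simp add: fun_eq_iff power2_eq_square field_simps)
  moreover have "y * ((y + 1) * exp y) + (2 * ((y + 1) * exp y) - exp y)
      = (y\<^sup>2 + 3 * y + 1) * exp y"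
    by (simp add: power2_eq_square algebra_simps)
  ultimately show ?thesis
    by simp
qed

lemma powr_between_one_and_square:
  fixes t c :: real
  assumes t: "t \<ge> 0" and c: "0 \<le> c" "c \<le> 2"
  shows "min 1 (t\<^sup>2) \<le> t powr c \<and> t powr c \<le> max 1 (t\<^sup>2)"
proof -
  consider "t = 0" | "0 < t" "t \<le> 1" | "t \<ge> 1"
    using t by linarith
  then show ?thesis
  proof cases
    case 2
    then have "t powr 2 \<le> t powr c" "t powr c \<le> t powr 0"
      using c by (intro powr_mono'; simp)+
    with 2 show ?thesis by (simp add: powr_numeral)
  next
    case 3
    then have "t powr 0 \<le> t powr c" "t powr c \<le> t powr 2"
      using c by (intro powr_mono; simp)+
    with 3 show ?thesis by (simp add: powr_numeral)
  qed simp
qed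

lemma powr_quadratic_bounds:
  fixes x W c :: real
  assumes x: "x \<ge> 0" and W: "W > 0" and c: "0 \<le> c" "c \<le> 2"
  shows "W powr c * (3 * x / W - 5 / 4 - x\<^sup>2 / W\<^sup>2) \<le> x powr c"
    "x powr c \<le> W powr c * (1 + x\<^sup>2 / W\<^sup>2)"
proof -
  define t where "t = x / W"
  have "3 * t - 5 / 4 - t\<^sup>2 \<le> 1" "3 * t - 5 / 4 - t\<^sup>2 \<le> t\<^sup>2"
    using zero_le_power2[of "t - 3 / 2"] zero_le_power2[of "t - 3 / 4"]
    by (simp_all add: power2_eq_square algebra_simps)
  then have "3 * t - 5 / 4 - t\<^sup>2 \<le> min 1 (t\<^sup>2)" "max 1 (t\<^sup>2) \<le> 1 + t\<^sup>2"
    by (simp_all add: max_def)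
  moreover have "min 1 (t\<^sup>2) \<le> t powr c \<and> t powr c \<le> max 1 (t\<^sup>2)"
    using powr_between_one_and_square[of t c] x W c by (simp add: t_def)
  ultimately have "3 * t - 5 / 4 - t\<^sup>2 \<le> t powr c" "t powr c \<le> 1 + t\<^sup>2"
    by linarith+
  moreover have "x powr c = W powr c * t powr c"
    using W by (simp add: t_def powr_divide)
  ultimately show "W powr c * (3 * x / W - 5 / 4 - x\<^sup>2 / W\<^sup>2) \<le> x powr c"
    "x powr c \<le> W powr c * (1 + x\<^sup>2 / W\<^sup>2)"
    using W by (simp_all add: t_def power_divide mult_left_mono)
qed

lemma exp_series_second_moment_le:
  fixes y :: real
  assumes "y \<ge> 0"
  shows "(y\<^sup>2 + 3 * y + 1) * exp y / (y + 1)\<^sup>2 \<le> 5 / 4 * exp y"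
proof -
  have "y\<^sup>2 + 3 * y + 1 \<le> 5 / 4 * (y + 1)\<^sup>2"
    using zero_le_power2[of "y - 1"] by (simp add: power2_eq_square field_simps)
  then show ?thesis
    using assms by (simp add: divide_le_eq mult_right_mono mult.commute mult.left_commute)
qed

lemma exp_series_powr_weight_upper:
  fixes r :: "nat \<Rightarrow> real" and B c y :: real
  assumes c: "0 \<le> c" "c \<le> 2" and y: "y \<ge> 0"
    and r_nonneg: "\<And>k. r k \<ge> 0" and r_upper: "\<And>k. r k \<le> B * real (k + 1) powr c"
  shows "summable (\<lambda>k. r k * (y ^ k / fact k))"
    "(\<Sum>k. r k * (y ^ k / fact k)) \<le> 3 * B * (y + 1) powr c * exp y"
proof -
  define W where "W = y + 1"
  define e where "e k = y ^ k / fact k" for k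
  have W: "W \<ge> 1" using y by (simp add: W_def)
  have e: "e k \<ge> 0" for k using y by (simp add: e_def)
  have B: "B \<ge> 0" using r_nonneg[of 0] r_upper[of 0] by simp
  define U where "U k = B * W powr c * (e k + real (k + 1) ^ 2 * e k / W\<^sup>2)" for k
  have rU: "r k * e k \<le> U k" for k
  proof -
    have "r k * e k \<le> B * real (k + 1) powr c * e k"
      using r_upper[of k] e[of k] by (rule mult_right_mono)
    also have "\<dots> \<le> B * (W powr c * (1 + real (k + 1) ^ 2 / W\<^sup>2)) * e k"
      using powr_quadratic_bounds(2)[of "real (k + 1)" W c] W c B e[of k]
      by (intro mult_right_mono mult_left_mono) auto
    also have "\<dots> = U k"
      by (simp add: U_def algebra_simps)
    finally show ?thesis .
  qed
  have SU: "U sums (B * W powr c * (exp y + (y\<^sup>2 + 3 * y + 1) * exp y / W\<^sup>2))"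
    unfolding U_def e_def
    by (intro sums_mult sums_add exp_series_sums sums_divide exp_series_second_moment)
  have summable: "summable (\<lambda>k. r k * e k)"
    by (rule summable_comparison_test'[OF sums_summable[OF SU], of 0]) (use r_nonneg e rU in auto)
  then show "summable (\<lambda>k. r k * (y ^ k / fact k))"
    by (simp add: e_def)
  have "(\<Sum>k. r k * e k) \<le> B * W powr c * (exp y + (y\<^sup>2 + 3 * y + 1) * exp y / W\<^sup>2)"
    by (rule sums_le[OF rU summable_sums[OF summable] SU])
  also have "\<dots> \<le> B * W powr c * (3 * exp y)"
  proof (rule mult_left_mono)
    show "exp y + (y\<^sup>2 + 3 * y + 1) * exp y / W\<^sup>2 \<le> 3 * exp y"
      using exp_series_second_moment_le[OF y, folded W_def] exp_ge_zero[of y] by linarith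
  qed (use B in simp)
  finally show "(\<Sum>k. r k * (y ^ k / fact k)) \<le> 3 * B * (y + 1) powr c * exp y"
    by (simp add: W_def e_def mult_ac)
qed

lemma exp_series_powr_weight_lower:
  fixes r :: "nat \<Rightarrow> real" and A c y :: real
  assumes c: "0 \<le> c" "c \<le> 2" and y: "y \<ge> 0" and A: "A \<ge> 0"
    and r_lower: "\<And>k. A * real (k + 1) powr c \<le> r k"
    and summable: "summable (\<lambda>k. r k * (y ^ k / fact k))"
  shows "A * (y + 1) powr c * exp y / 2 \<le> (\<Sum>k. r k * (y ^ k / fact k))"
proof -
  define W where "W = y + 1"
  define e where "e k = y ^ k / fact k" for k
  have W: "W \<ge> 1" using y by (simp add: W_def)
  have e: "e k \<ge> 0" for k using y by (simp add: e_def)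
  define L where
    "L k = A * W powr c * (3 * (real (k + 1) * e k) / W - 5 / 4 * e k - real (k + 1) ^ 2 * e k / W\<^sup>2)"
    for k
  have Lr: "L k \<le> r k * e k" for k
  proof -
    have "L k = A * (W powr c * (3 * real (k + 1) / W - 5 / 4 - real (k + 1) ^ 2 / W\<^sup>2)) * e k"
      by (simp add: L_def algebra_simps)
    also have "\<dots> \<le> A * real (k + 1) powr c * e k"
      using powr_quadratic_bounds(1)[of "real (k + 1)" W c] W c A e[of k]
      by (intro mult_right_mono mult_left_mono) auto
    also have "\<dots> \<le> r k * e k"
      using r_lower[of k] e[of k] by (rule mult_right_mono)
    finally show ?thesis .
  qed
  have "L sums (A * W powr c
      * (3 * (W * exp y) / W - 5 / 4 * exp y - (y\<^sup>2 + 3 * y + 1) * exp y / W\<^sup>2))"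
    unfolding L_def e_def W_def
    by (intro sums_mult sums_diff sums_divide exp_series_sums exp_series_first_moment
        exp_series_second_moment)
  then have SL: "L sums (A * W powr c
      * (3 * exp y - 5 / 4 * exp y - (y\<^sup>2 + 3 * y + 1) * exp y / W\<^sup>2))"
    using W by simp
  have "exp y / 2 \<le> 3 * exp y - 5 / 4 * exp y - (y\<^sup>2 + 3 * y + 1) * exp y / W\<^sup>2"
    using exp_series_second_moment_le[OF y, folded W_def] by linarith
  then have "A * W powr c * (exp y / 2)
      \<le> A * W powr c * (3 * exp y - 5 / 4 * exp y - (y\<^sup>2 + 3 * y + 1) * exp y / W\<^sup>2)"
    by (rule mult_left_mono) (use A in simp)
  also have "\<dots> \<le> (\<Sum>k. r k * e k)"
    by (rule sums_le[OF Lr SL summable_sums]) (use summable in \<open>simp add: e_def\<close>)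
  finally show ?thesis
    by (simp add: W_def e_def mult.assoc)
qed

section \<open>Ratios of Pochhammer symbols\<close>

lemma pochhammer_ratio_Suc:
  fixes b c :: real
  assumes "b > 0"
  shows "pochhammer (b + c) (Suc k) / pochhammer b (Suc k)
    = pochhammer (b + c) k / pochhammer b k * (1 + c / (b + real k))"
proof -
  have "b + real k > 0" using assms by simp
  then show ?thesis by (simp add: pochhammer_Suc field_simps)
qed

lemma pochhammer_ratio_nonneg:
  fixes b c :: real
  assumes "b > 0" "c \<ge> 0"
  shows "pochhammer (b + c) k / pochhammer b k \<ge> 0"
  using assms by (intro divide_nonneg_nonneg pochhammer_nonneg) auto

lemma inverse_le_ln_succ_diff:
  fixes x :: real
  assumes "x > 0"
  shows "1 / (x + 1) \<le> ln (x + 1) - ln x"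
proof -
  have "ln (x / (x + 1)) \<le> x / (x + 1) - 1"
    using assms by (intro ln_le_minus_one) simp
  also have "\<dots> = - (1 / (x + 1))"
    using assms by (simp add: field_simps)
  finally show ?thesis
    using assms by (simp add: ln_div)
qed

lemma pochhammer_ratio_le_exp:
  fixes b c :: real
  assumes b: "b > 0" and c: "c \<ge> 0"
  shows "pochhammer (b + c) (Suc k) / pochhammer b (Suc k)
    \<le> exp (c * (1 / b + ln (b + real k) - ln b))"
proof (induction k)
  case 0
  show ?case
    using exp_ge_add_one_self[of "c / b"] b
    by (simp add: pochhammer_ratio_Suc[OF b] add_divide_distrib)
next
  case (Suc k)
  have "pochhammer (b + c) (Suc (Suc k)) / pochhammer b (Suc (Suc k))
      = pochhammer (b + c) (Suc k) / pochhammer b (Suc k) * (1 + c / (b + real (Suc k)))"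
    by (rule pochhammer_ratio_Suc[OF b])
  also have "\<dots> \<le> exp (c * (1 / b + ln (b + real k) - ln b)) * exp (c / (b + real (Suc k)))"
    using Suc.IH exp_ge_add_one_self[of "c / (b + real (Suc k))"] pochhammer_ratio_nonneg[OF b c]
      b c by (intro mult_mono) auto
  also have "\<dots> = exp (c * (1 / b + ln (b + real k) - ln b + 1 / (b + real k + 1)))"
    by (simp add: mult_exp_exp algebra_simps)
  also have "\<dots> \<le> exp (c * (1 / b + ln (b + real (Suc k)) - ln b))"
  proof -
    have "1 / (b + real k + 1) \<le> ln (b + real (Suc k)) - ln (b + real k)"
      using inverse_le_ln_succ_diff[of "b + real k"] b by (simp add: add_ac)
    then have "c * (1 / b + ln (b + real k) - ln b + 1 / (b + real k + 1))
        \<le> c * (1 / b + ln (b + real (Suc k)) - ln b)"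
      by (intro mult_left_mono[OF _ c]) linarith
    then show ?thesis by simp
  qed
  finally show ?case .
qed

lemma pochhammer_ratio_upper_bound:
  fixes b c :: real
  assumes b: "1 / 2 \<le> b" "b \<le> 1" and c: "0 \<le> c" "c \<le> 2"
  shows "pochhammer (b + c) k / pochhammer b k \<le> 4 * exp 4 * real (k + 1) powr c"
proof (cases k)
  case 0
  then show ?thesis
    using exp_ge_add_one_self[of 4] by simp
next
  case (Suc m)
  have b0: "b > 0" and bm: "b + real m > 0" using b by simp_all
  have "pochhammer (b + c) k / pochhammer b k \<le> exp (c * (1 / b + ln (b + real m) - ln b))"
    using pochhammer_ratio_le_exp[OF b0 c(1), of m] Suc by simp
  also have "\<dots> = exp (c / b) * ((b + real m) / b) powr c"
    using b0 bm by (simp add: powr_def ln_div mult_exp_exp algebra_simps)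
  also have "\<dots> \<le> exp 4 * (2 * real (k + 1)) powr c"
  proof (rule mult_mono)
    show "exp (c / b) \<le> exp 4"
      using b c by (simp add: divide_le_eq)
    have "real m * 1 \<le> real m * (2 * b)"
      using b by (intro mult_left_mono) auto
    then have "(b + real m) / b \<le> 2 * real (k + 1)"
      using b Suc by (simp add: divide_le_eq algebra_simps)
    then show "((b + real m) / b) powr c \<le> (2 * real (k + 1)) powr c"
      using b0 bm c by (intro powr_mono2) auto
  qed simp_all
  also have "\<dots> = exp 4 * (2 powr c * real (k + 1) powr c)"
    by (subst powr_mult) auto
  also have "\<dots> \<le> exp 4 * (4 * real (k + 1) powr c)"
    using powr_mono[of c 2 2] c by (intro mult_left_mono mult_right_mono) auto
  finally show ?thesis by simp
qed

lemma one_plus_powr_le: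
  fixes x p :: real
  assumes "x > -1" "0 \<le> p" "p \<le> 1"
  shows "(1 + x) powr p \<le> 1 + p * x"
  using Youngs_inequality_0[of p "1 - p" "1 + x" 1] assms by (simp add: algebra_simps)

lemma pochhammer_ratio_ge_powr:
  fixes b c :: real
  assumes b: "b > 0" and c: "0 \<le> c" "c \<le> 2"
  shows "((b + real k) * (b + real k + 1) / (b * (b + 1))) powr (c / 2)
    \<le> pochhammer (b + c) k / pochhammer b k"
proof (induction k)
  case 0
  then show ?case using b by simp
next
  case (Suc k)
  define s where "s = (b + real k) * (b + real k + 1) / (b * (b + 1))"
  have bk: "b + real k > 0" using b by simp
  have "1 + 2 / (b + real k) = (b + real k + 2) / (b + real k)"
    using bk by (simp add: field_simps)
  then have "(b + real (Suc k)) * (b + real (Suc k) + 1) / (b * (b + 1))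
      = s * (1 + 2 / (b + real k))"
    using b bk by (simp add: s_def divide_simps) (simp add: algebra_simps)
  then have "((b + real (Suc k)) * (b + real (Suc k) + 1) / (b * (b + 1))) powr (c / 2)
      = (s * (1 + 2 / (b + real k))) powr (c / 2)"
    by (simp only:)
  also have "\<dots> = s powr (c / 2) * (1 + 2 / (b + real k)) powr (c / 2)"
    by (rule powr_mult)
  also have "\<dots> \<le> pochhammer (b + c) k / pochhammer b k * (1 + c / (b + real k))"
  proof -
    have "0 < 2 / (b + real k)" using bk by simp
    then have "-1 < 2 / (b + real k)" by linarith
    from one_plus_powr_le[OF this, of "c / 2"] c
    have "(1 + 2 / (b + real k)) powr (c / 2) \<le> 1 + c / (b + real k)"
      by simp
    then show ?thesis
      using Suc.IH pochhammer_ratio_nonneg[OF b c(1)]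
      by (intro mult_mono) (auto simp: s_def)
  qed
  also have "\<dots> = pochhammer (b + c) (Suc k) / pochhammer b (Suc k)"
    by (rule pochhammer_ratio_Suc[OF b, symmetric])
  finally show ?case .
qed

lemma pochhammer_ratio_lower_bound:
  fixes b c :: real
  assumes b: "1 / 2 \<le> b" "b \<le> 1" and c: "0 \<le> c" "c \<le> 2"
  shows "real (k + 1) powr c / 4 \<le> pochhammer (b + c) k / pochhammer b k"
proof -
  have b0: "b > 0" using b by simp
  have "real (k + 1) powr c / 4 \<le> real (k + 1) powr c / 2 powr c"
    using powr_mono[of c 2 2] c by (intro divide_left_mono) auto
  also have "\<dots> = (real (k + 1) / 2) powr c"
    by (simp add: powr_divide)
  also have "\<dots> = ((real (k + 1) / 2) powr 2) powr (c / 2)"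
    by (simp only: powr_powr) simp
  also have "\<dots> = ((real (k + 1))\<^sup>2 / 4) powr (c / 2)"
    by (simp add: power_divide)
  also have "\<dots> \<le> ((b + real k) * (b + real k + 1) / (b * (b + 1))) powr (c / 2)"
  proof (rule powr_mono2)
    have "(real (k + 1))\<^sup>2 / 4 \<le> (b + real k) * (b + real k + 1) / 2"
      using b mult_mono[of "real (k + 1) / 2" "b + real k" "real (k + 1)" "b + real k + 1"]
      by (simp add: power2_eq_square)
    also have "\<dots> \<le> (b + real k) * (b + real k + 1) / (b * (b + 1))"
      using b mult_mono[of b 1 "b + 1" 2] by (intro divide_left_mono) auto
    finally show "(real (k + 1))\<^sup>2 / 4 \<le> (b + real k) * (b + real k + 1) / (b * (b + 1))" .
  qed (use c in auto)
  also have "\<dots> \<le> pochhammer (b + c) k / pochhammer b k"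
    by (rule pochhammer_ratio_ge_powr[OF b0 c])
  finally show ?thesis .
qed

section \<open>Two-sided bounds for M and T\<close>

lemma kummerM_shifted_bounds:
  fixes b c y :: real
  assumes b: "1 / 2 \<le> b" "b \<le> 1" and c: "0 \<le> c" "c \<le> 2" and y: "y \<ge> 0"
  shows "(y + 1) powr c * exp y / 8 \<le> kummerM (b + c) b y"
    "kummerM (b + c) b y \<le> 12 * exp 4 * (y + 1) powr c * exp y"
proof -
  have M: "kummerM (b + c) b y
      = (\<Sum>k. pochhammer (b + c) k / pochhammer b k * (y ^ k / fact k))"
    by (simp add: kummerM_def)
  have b0: "b > 0" using b by simp
  note upper = exp_series_powr_weight_upper[OF c y pochhammer_ratio_nonneg[OF b0 c(1)]
      pochhammer_ratio_upper_bound[OF b c]]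
  have "1 / 4 * real (k + 1) powr c \<le> pochhammer (b + c) k / pochhammer b k" for k
    using pochhammer_ratio_lower_bound[OF b c, of k] by simp
  note lower = exp_series_powr_weight_lower[OF c y _ this upper(1)]
  show "(y + 1) powr c * exp y / 8 \<le> kummerM (b + c) b y"
    using lower by (simp add: M)
  show "kummerM (b + c) b y \<le> 12 * exp 4 * (y + 1) powr c * exp y"
    using upper(2) by (simp add: M)
qed

lemma kummerM_scaled_bounds:
  fixes \<alpha> \<beta> w :: real
  assumes \<alpha>: "1 / 2 \<le> \<alpha>" "\<alpha> \<le> 1" and \<beta>: "\<beta> \<le> 0" "\<alpha> - \<beta> \<le> 2" and w: "w \<ge> 1"
  shows "exp (w / 2) * w powr (- \<beta>) / 8 \<le> exp (w / 2) * kummerM \<beta> \<alpha> (- w)"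
    "exp (w / 2) * kummerM \<beta> \<alpha> (- w) \<le> 48 * exp 4 * exp (w / 2) * w powr (- \<beta>)"
proof -
  define E where "E = exp (- w) * exp (w / 2)"
  have E: "E \<ge> 0" "E * exp w = exp (w / 2)"
    by (simp_all add: E_def mult_exp_exp)
  have G: "exp (w / 2) * kummerM \<beta> \<alpha> (- w) = E * kummerM (\<alpha> - \<beta>) \<alpha> w"
    using kummerM_Kummer_transformation[of \<alpha> "\<alpha> - \<beta>" w] \<alpha> by (simp add: E_def)
  have M: "(w + 1) powr (- \<beta>) * exp w / 8 \<le> kummerM (\<alpha> - \<beta>) \<alpha> w"
    "kummerM (\<alpha> - \<beta>) \<alpha> w \<le> 12 * exp 4 * (w + 1) powr (- \<beta>) * exp w"
    using kummerM_shifted_bounds[OF \<alpha>, of "- \<beta>" w] \<alpha> \<beta> w by simp_all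
  have lo: "w powr (- \<beta>) \<le> (w + 1) powr (- \<beta>)"
    using w \<beta> by (intro powr_mono2) auto
  have up: "(w + 1) powr (- \<beta>) \<le> 4 * w powr (- \<beta>)"
  proof -
    have "(w + 1) powr (- \<beta>) \<le> (2 * w) powr (- \<beta>)"
      using w \<beta> by (intro powr_mono2) auto
    also have "\<dots> \<le> 4 * w powr (- \<beta>)"
      using powr_mono[of "- \<beta>" 2 2] \<alpha> \<beta> by (simp add: powr_mult mult_right_mono)
    finally show ?thesis .
  qed
  have "exp (w / 2) * w powr (- \<beta>) / 8 \<le> E * exp w * (w + 1) powr (- \<beta>) / 8"
    using lo by (simp add: E(2))
  also have "\<dots> \<le> E * kummerM (\<alpha> - \<beta>) \<alpha> w"
    using mult_left_mono[OF M(1) E(1)] by (simp add: mult_ac)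
  finally show "exp (w / 2) * w powr (- \<beta>) / 8 \<le> exp (w / 2) * kummerM \<beta> \<alpha> (- w)"
    by (simp only: G)
  have "E * kummerM (\<alpha> - \<beta>) \<alpha> w \<le> 12 * exp 4 * (E * exp w) * (w + 1) powr (- \<beta>)"
    using mult_left_mono[OF M(2) E(1)] by (simp add: mult_ac)
  also have "\<dots> \<le> 12 * exp 4 * exp (w / 2) * (4 * w powr (- \<beta>))"
    using up by (simp add: E(2))
  finally show "exp (w / 2) * kummerM \<beta> \<alpha> (- w) \<le> 48 * exp 4 * exp (w / 2) * w powr (- \<beta>)"
    by (simp add: G)
qed

lemma kummerT_scaled_bounds:
  fixes \<alpha> \<beta> w :: real
  assumes \<alpha>: "\<alpha> > 0" and \<beta>: "\<beta> \<le> 0" "\<alpha> - \<beta> \<le> 2" and w: "w \<ge> 1"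
  shows "exp (- w / 2) * w powr (\<beta> - \<alpha>) / 16 \<le> exp (w / 2) * kummerT \<beta> \<alpha> (- w)"
    "exp (w / 2) * kummerT \<beta> \<alpha> (- w) \<le> exp (- w / 2) * w powr (\<beta> - \<alpha>)"
proof -
  have e: "exp (w / 2) * exp (- w) = exp (- w / 2)"
    by (simp add: mult_exp_exp)
  note T = kummerT_bounds[of \<beta> \<alpha> w]
  have "1 / 16 \<le> (4 :: real) powr (\<beta> - \<alpha>)"
    using powr_mono[of "- 2" "\<beta> - \<alpha>" 4] \<beta> by (simp add: powr_minus)
  then have "w powr (\<beta> - \<alpha>) / 16 \<le> 4 powr (\<beta> - \<alpha>) * w powr (\<beta> - \<alpha>)"
    using mult_right_mono[of "1 / 16" "4 powr (\<beta> - \<alpha>)" "w powr (\<beta> - \<alpha>)"] by simp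
  also have "\<dots> = (4 * w) powr (\<beta> - \<alpha>)"
    by (simp add: powr_mult)
  also have "\<dots> \<le> (w + 1 - \<beta>) powr (\<beta> - \<alpha>)"
    using \<alpha> \<beta> w by (intro powr_mono2') auto
  finally have "exp (- w / 2) * w powr (\<beta> - \<alpha>) / 16
      \<le> exp (w / 2) * (exp (- w) * (w + 1 - \<beta>) powr (\<beta> - \<alpha>))"
    by (simp add: e mult.assoc[symmetric] mult_left_mono)
  also have "\<dots> \<le> exp (w / 2) * kummerT \<beta> \<alpha> (- w)"
    using T(1) \<alpha> \<beta> w by simp
  finally show "exp (- w / 2) * w powr (\<beta> - \<alpha>) / 16 \<le> exp (w / 2) * kummerT \<beta> \<alpha> (- w)" .
  have "exp (w / 2) * kummerT \<beta> \<alpha> (- w) \<le> exp (w / 2) * (exp (- w) * w powr (\<beta> - \<alpha>))"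
    using T(2) \<alpha> \<beta> w by simp
  then show "exp (w / 2) * kummerT \<beta> \<alpha> (- w) \<le> exp (- w / 2) * w powr (\<beta> - \<alpha>)"
    by (simp add: e mult.assoc[symmetric])
qed

lemma kummer_scaled_bounds:
  fixes \<alpha> \<beta> w :: real
  assumes "1 / 2 \<le> \<alpha>" "\<alpha> \<le> 1" "\<beta> \<le> 0" "\<alpha> - \<beta> - 1 \<le> 1" "w \<ge> 1"
  shows "exp (- w / 2) * w powr (\<beta> - \<alpha>) / (64 * exp 4) \<le> exp (w / 2) * kummerT \<beta> \<alpha> (- w) \<and>
    exp (w / 2) * kummerT \<beta> \<alpha> (- w) \<le> 64 * exp 4 * exp (- w / 2) * w powr (\<beta> - \<alpha>) \<and>
    exp (w / 2) * w powr (- \<beta>) / (64 * exp 4) \<le> exp (w / 2) * kummerM \<beta> \<alpha> (- w) \<and>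
    exp (w / 2) * kummerM \<beta> \<alpha> (- w) \<le> 64 * exp 4 * exp (w / 2) * w powr (- \<beta>)"
proof -
  have C: "16 \<le> 64 * exp (4 :: real)" "8 \<le> 64 * exp (4 :: real)" "1 \<le> 64 * exp (4 :: real)"
    "48 * exp 4 \<le> 64 * exp (4 :: real)"
    using exp_ge_add_one_self[of 4] by simp_all
  have lower: "x / (64 * exp 4) \<le> y" if "x / K \<le> y" "0 \<le> x" "0 < K" "K \<le> 64 * exp 4"
    for x y K :: real
    using that order_trans[OF divide_left_mono[of K "64 * exp 4" x]] by simp
  have upper: "y \<le> 64 * exp 4 * x" if "y \<le> K * x" "0 \<le> x" "K \<le> 64 * exp 4" for x y K :: real
    using that order_trans[OF _ mult_right_mono[of K "64 * exp 4" x]] by simp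
  have \<alpha>\<beta>: "\<alpha> > 0" "\<alpha> - \<beta> \<le> 2" using assms by simp_all
  note T = kummerT_scaled_bounds[OF \<alpha>\<beta>(1) assms(3) \<alpha>\<beta>(2) assms(5)]
  note M = kummerM_scaled_bounds[OF assms(1-3) \<alpha>\<beta>(2) assms(5)]
  show ?thesis
  proof (intro conjI)
    show "exp (- w / 2) * w powr (\<beta> - \<alpha>) / (64 * exp 4) \<le> exp (w / 2) * kummerT \<beta> \<alpha> (- w)"
      using lower[OF T(1)] C by simp
    show "exp (w / 2) * kummerT \<beta> \<alpha> (- w) \<le> 64 * exp 4 * exp (- w / 2) * w powr (\<beta> - \<alpha>)"
      using upper[of _ 1 "exp (- w / 2) * w powr (\<beta> - \<alpha>)"] T(2) C by (simp add: mult.assoc)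
    show "exp (w / 2) * w powr (- \<beta>) / (64 * exp 4) \<le> exp (w / 2) * kummerM \<beta> \<alpha> (- w)"
      using lower[OF M(1)] C by simp
    show "exp (w / 2) * kummerM \<beta> \<alpha> (- w) \<le> 64 * exp 4 * exp (w / 2) * w powr (- \<beta>)"
      using upper[of _ "48 * exp 4" "exp (w / 2) * w powr (- \<beta>)"] M(2) C by (simp add: mult.assoc)
  qed
qed


theorem corollary4p10:
  fixes n :: nat
  assumes "n \<ge> 2"
  shows "\<exists>C>0. \<forall>(j::nat) (lam::real) (z::real).
    let \<alpha> = 1 - 1 / real n;
        \<beta> = (1 - 1 / real n) / 2 - lam / (real j * real n);
        w = real j * z ^ n;
        G = exp (w / 2) * kummerM \<beta> \<alpha> (- w);
        D = exp (w / 2) * kummerT \<beta> \<alpha> (- w)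
    in (j \<ge> 1 \<and> lam \<ge> real (n - 1) * real j / 2 \<and> \<alpha> - \<beta> - 1 \<le> 1 \<and> z \<ge> 1) \<longrightarrow>
       (exp (- w / 2) * w powr (\<beta> - \<alpha>) / C \<le> D \<and>
        D \<le> C * exp (- w / 2) * w powr (\<beta> - \<alpha>) \<and>
        exp (w / 2) * w powr (- \<beta>) / C \<le> G \<and>
        G \<le> C * exp (w / 2) * w powr (- \<beta>))"
  unfolding Let_def
proof (intro exI[of _ "64 * exp 4"] conjI[of "(0::real) < 64 * exp 4"] allI impI, goal_cases)
  case 1
  show ?case by simp
next
  case (2 j lam z)
  then have j: "real j \<ge> 1" and lam: "(real n - 1) * real j / 2 \<le> lam" and z: "z \<ge> 1"
    using assms by (auto simp: of_nat_diff)
  have n: "real n \<ge> 2" using assms by simp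
  have "(1 - 1 / real n) / 2 = (real n - 1) * real j / 2 / (real j * real n)"
    using j n by (simp add: field_simps)
  also have "\<dots> \<le> lam / (real j * real n)"
    using lam j n by (intro divide_right_mono) auto
  finally have \<beta>: "(1 - 1 / real n) / 2 - lam / (real j * real n) \<le> 0" by simp
  have w: "1 \<le> real j * z ^ n"
    using mult_mono[of 1 "real j" 1 "z ^ n"] j one_le_power[OF z] by simp
  show ?case
  proof (rule kummer_scaled_bounds)
    show "1 / 2 \<le> 1 - 1 / real n"
      using n by (simp add: field_simps)
  qed (use 2 \<beta> w in simp_all)
qed

end
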